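(* Let $\boldsymbol{f}$ be a clean map on an $\boldsymbol{\mathcal{L}}_\Lambda$ modal space $\boldsymbol{X}$. Then $\boldsymbol{f}$ is continuous with respect to the Stone topology on $\boldsymbol{X}$.
   Context: Given a countable set $\Phi$ of atoms and a finite set $I$ of agents, $\mathcal{L}$ is the modal language $\varphi::=\top\mid p\mid\neg\varphi\mid\varphi\wedge\varphi\mid\square_i\varphi$. A logic $\Lambda$ is a normal modal logic over $\mathcal{L}$ extending $K$; $\boldsymbol{\varphi}$ is the class of formulas $\Lambda$-equivalent to $\varphi$, $\boldsymbol{\mathcal{L}}_\Lambda$ the set of such classes. Kripke models $M=(\llbracket M\rrbracket,R,\llbracket\cdot\rrbracket)$ have countable nonempty state sets, relations $R_i$ and a valuation; pointed models $Ms$ are evaluated with standard semantics. For a set $X$ of pointed Kripke models, the $\boldsymbol{\mathcal{L}}_\Lambda$ modal space is $\boldsymbol{X}=\{\boldsymbol{x}:x\in X\}$, $\boldsymbol{x}=\{y\in X:y\vDash\varphi\text{ iff }x\vDash\varphi\text{ for all }\varphi\}$. The Stone topology on $\boldsymbol{X}$ has basis $U_{\boldsymbol{\varphi}}=\{\boldsymbol{x}:x\vDash\varphi\}$, $\varphi\in\mathcal{L}$. A multi-pointed action model is $\Sigma\Gamma=(\llbracket\Sigma\rrbracket,\mathsf{R},pre,post,\Gamma)$: countable nonempty set of actions, relations $\mathsf{R}_i$ on it, $pre:\llbracket\Sigma\rrbracket\to\mathcal{L}$, $post:\llbracket\Sigma\rrbracket\to\mathcal{L}$ with each $post(\sigma)$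 either $\top$ or a conjunction of literals over $\Phi$, and $\emptyset\ne\Gamma\subseteq\llbracket\Sigma\rrbracket$. It is precondition finite if $\{\boldsymbol{pre(\sigma)}\}$ is finite; exhaustive over $X$ if each $x\in X$ satisfies $pre(\sigma)$ for some $\sigma\in\Gamma$; deterministic over $X$ if no $x\in X$ satisfies $pre(\sigma)\wedge pre(\sigma')$ for distinct $\sigma,\sigma'\in\Gamma$. The product update $Ms\otimes\Sigma\Gamma$ has states $\{(s,\sigma):Ms\vDash pre(\sigma)\}$, relations $(s,\sigma)R'_i(t,\tau)$ iff $sR_it$ and $\sigma\mathsf{R}_i\tau$, valuation $\llbracket p\rrbracket'=\{(s,\sigma):s\in\llbracket p\rrbracket,post(\sigma)\nvDash\neg p\}\cup\{(s,\sigma):post(\sigma)\vDash p\}$, and designated state $(s,\sigma)$ with $\sigma\in\Gamma$ the unique action with $Ms\vDash pre(\sigma)$. $\Sigma\Gamma$ is closing over $X$ if $x\otimes\Sigma\Gamma\in X$ for all $x\in X$. A map $\boldsymbol{f}:\boldsymbol{X}\to\boldsymbol{X}$ is clean if there is a precondition finite $\Sigma\Gamma$, closing, deterministic and exhaustive over $X$, with $\boldsymbol{f}(\boldsymbol{x})=\boldsymbol{y}$ iff $x\otimes\Sigma\Gamma\in\boldsymbol{y}$. *)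

theory Defs
  imports "HOL-Analysis.Analysis"
begin

datatype ('p, 'i) fm =
    Top
  | Atom 'p
  | Neg "('p, 'i) fm"
  | Conj "('p, 'i) fm" "('p, 'i) fm"
  | Box 'i "('p, 'i) fm"

definition Imp :: "('p, 'i) fm \<Rightarrow> ('p, 'i) fm \<Rightarrow> ('p, 'i) fm" where
  "Imp a b = Neg (Conj a (Neg b))"

definition Iff :: "('p, 'i) fm \<Rightarrow> ('p, 'i) fm \<Rightarrow> ('p, 'i) fm" where
  "Iff a b = Conj (Imp a b) (Imp b a)"

fun peval :: "(('p, 'i) fm \<Rightarrow> bool) \<Rightarrow> ('p, 'i) fm \<Rightarrow> bool" where
  "peval v Top = True"
| "peval v (Atom p) = v (Atom p)"
| "peval v (Neg a) = (\<not> peval v a)"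
| "peval v (Conj a b) = (peval v a \<and> peval v b)"
| "peval v (Box i a) = v (Box i a)"

definition tautology :: "('p, 'i) fm \<Rightarrow> bool" where
  "tautology a \<longleftrightarrow> (\<forall>v. peval v a)"

fun subst :: "('p \<Rightarrow> ('p, 'i) fm) \<Rightarrow> ('p, 'i) fm \<Rightarrow> ('p, 'i) fm" where
  "subst s Top = Top"
| "subst s (Atom p) = s p"
| "subst s (Neg a) = Neg (subst s a)"
| "subst s (Conj a b) = Conj (subst s a) (subst s b)"
| "subst s (Box i a) = Box i (subst s a)"

definition normal_logic :: "('p, 'i) fm set \<Rightarrow> bool" where
  "normal_logic L \<longleftrightarrow>
     (\<forall>a. tautology a \<longrightarrow> a \<in> L) \<and>
     (\<forall>i a b. Imp (Box i (Imp a b)) (Imp (Box i a) (Box i b)) \<in> L) \<and>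
     (\<forall>a b. a \<in> L \<longrightarrow> Imp a b \<in> L \<longrightarrow> b \<in> L) \<and>
     (\<forall>i a. a \<in> L \<longrightarrow> Box i a \<in> L) \<and>
     (\<forall>s a. a \<in> L \<longrightarrow> subst s a \<in> L)"

definition lclass :: "('p, 'i) fm set \<Rightarrow> ('p, 'i) fm \<Rightarrow> ('p, 'i) fm set" where
  "lclass L a = {b. Iff a b \<in> L}"

text \<open>States are drawn from the countable universe nat (models have countable state sets).\<close>
record ('p, 'i) kmodel =
  W :: "nat set"
  Rel :: "'i \<Rightarrow> (nat \<times> nat) set"
  Val :: "'p \<Rightarrow> nat set"

definition is_kmodel :: "('p, 'i) kmodel \<Rightarrow> bool" where
  "is_kmodel M \<longleftrightarrow> W M \<noteq> {} \<and> (\<forall>i. Rel M i \<subseteq> W M \<times> W M) \<and> (\<forall>p. Val M p \<subseteq> W M)"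

type_synonym ('p, 'i) pmodel = "('p, 'i) kmodel \<times> nat"

definition is_pmodel :: "('p, 'i) pmodel \<Rightarrow> bool" where
  "is_pmodel x \<longleftrightarrow> is_kmodel (fst x) \<and> snd x \<in> W (fst x)"

fun sat :: "('p, 'i) kmodel \<Rightarrow> nat \<Rightarrow> ('p, 'i) fm \<Rightarrow> bool" where
  "sat M s Top = True"
| "sat M s (Atom p) = (s \<in> Val M p)"
| "sat M s (Neg a) = (\<not> sat M s a)"
| "sat M s (Conj a b) = (sat M s a \<and> sat M s b)"
| "sat M s (Box i a) = (\<forall>t. (s, t) \<in> Rel M i \<longrightarrow> sat M t a)"

definition psat :: "('p, 'i) pmodel \<Rightarrow> ('p, 'i) fm \<Rightarrow> bool" where
  "psat x a = sat (fst x) (snd x) a"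

definition entails :: "('p, 'i) fm \<Rightarrow> ('p, 'i) fm \<Rightarrow> bool" where
  "entails a b \<longleftrightarrow> (\<forall>x::('p, 'i) pmodel. is_pmodel x \<longrightarrow> psat x a \<longrightarrow> psat x b)"

definition mclass :: "('p, 'i) pmodel set \<Rightarrow> ('p, 'i) pmodel \<Rightarrow> ('p, 'i) pmodel set" where
  "mclass X x = {y \<in> X. \<forall>a. psat y a \<longleftrightarrow> psat x a}"

definition mspace :: "('p, 'i) pmodel set \<Rightarrow> ('p, 'i) pmodel set set" where
  "mspace X = mclass X ` X"

definition basic_open :: "('p, 'i) pmodel set \<Rightarrow> ('p, 'i) fm \<Rightarrow> ('p, 'i) pmodel set set" where
  "basic_open X a = {mclass X x | x. x \<in> X \<and> psat x a}"

definition stone_topology :: "('p, 'i) pmodel set \<Rightarrow> ('p, 'i) pmodel set topology" where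
  "stone_topology X = topology_generated_by (range (basic_open X))"

record ('p, 'i) amodel =
  Act :: "nat set"
  ARel :: "'i \<Rightarrow> (nat \<times> nat) set"
  pre :: "nat \<Rightarrow> ('p, 'i) fm"
  post :: "nat \<Rightarrow> ('p, 'i) fm"
  Gam :: "nat set"

definition literal :: "('p, 'i) fm \<Rightarrow> bool" where
  "literal a \<longleftrightarrow> (\<exists>p. a = Atom p \<or> a = Neg (Atom p))"

inductive conj_literals :: "('p, 'i) fm \<Rightarrow> bool" where
  "literal a \<Longrightarrow> conj_literals a"
| "conj_literals a \<Longrightarrow> conj_literals b \<Longrightarrow> conj_literals (Conj a b)"

definition is_amodel :: "('p, 'i) amodel \<Rightarrow> bool" where
  "is_amodel A \<longleftrightarrow> Act A \<noteq> {} \<and> (\<forall>i. ARel A i \<subseteq> Act A \<times> Act A) \<and>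
     (\<forall>\<sigma>\<in>Act A. post A \<sigma> = Top \<or> conj_literals (post A \<sigma>)) \<and>
     Gam A \<noteq> {} \<and> Gam A \<subseteq> Act A"

definition precondition_finite :: "('p, 'i) fm set \<Rightarrow> ('p, 'i) amodel \<Rightarrow> bool" where
  "precondition_finite L A \<longleftrightarrow> finite ((\<lambda>\<sigma>. lclass L (pre A \<sigma>)) ` Act A)"

definition exhaustive :: "('p, 'i) pmodel set \<Rightarrow> ('p, 'i) amodel \<Rightarrow> bool" where
  "exhaustive X A \<longleftrightarrow> (\<forall>x\<in>X. \<exists>\<sigma>\<in>Gam A. psat x (pre A \<sigma>))"

definition deterministic :: "('p, 'i) pmodel set \<Rightarrow> ('p, 'i) amodel \<Rightarrow> bool" where
  "deterministic X A \<longleftrightarrow> (\<forall>x\<in>X. \<forall>\<sigma>\<in>Gam A. \<forall>\<tau>\<in>Gam A. \<sigma> \<noteq> \<tau> \<longrightarrow>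
      \<not> psat x (Conj (pre A \<sigma>) (pre A \<tau>)))"

text \<open>Product update. The product state (s,\<sigma>) is represented by prod_encode (s,\<sigma>).\<close>
definition upd_model :: "('p, 'i) kmodel \<Rightarrow> ('p, 'i) amodel \<Rightarrow> ('p, 'i) kmodel" where
  "upd_model M A =
     \<lparr> W = prod_encode ` {(s, \<sigma>). s \<in> W M \<and> \<sigma> \<in> Act A \<and> sat M s (pre A \<sigma>)},
       Rel = (\<lambda>i. {(prod_encode (s, \<sigma>), prod_encode (t, \<tau>)) | s \<sigma> t \<tau>.
                    s \<in> W M \<and> \<sigma> \<in> Act A \<and> sat M s (pre A \<sigma>) \<and>
                    t \<in> W M \<and> \<tau> \<in> Act A \<and> sat M t (pre A \<tau>) \<and>
                    (s, t) \<in> Rel M i \<and> (\<sigma>, \<tau>) \<in> ARel A i}),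
       Val = (\<lambda>p. prod_encode ` (
                {(s, \<sigma>). s \<in> W M \<and> \<sigma> \<in> Act A \<and> sat M s (pre A \<sigma>) \<and>
                    s \<in> Val M p \<and> \<not> entails (post A \<sigma>) (Neg (Atom p))} \<union>
                {(s, \<sigma>). s \<in> W M \<and> \<sigma> \<in> Act A \<and> sat M s (pre A \<sigma>) \<and>
                    entails (post A \<sigma>) (Atom p)})) \<rparr>"

definition update :: "('p, 'i) pmodel \<Rightarrow> ('p, 'i) amodel \<Rightarrow> ('p, 'i) pmodel" where
  "update x A = (upd_model (fst x) A,
     prod_encode (snd x, THE \<sigma>. \<sigma> \<in> Gam A \<and> psat x (pre A \<sigma>)))"

definition closing :: "('p, 'i) pmodel set \<Rightarrow> ('p, 'i) amodel \<Rightarrow> bool" where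
  "closing X A \<longleftrightarrow> (\<forall>x\<in>X. update x A \<in> X)"

definition clean :: "('p, 'i) fm set \<Rightarrow> ('p, 'i) pmodel set \<Rightarrow>
    (('p, 'i) pmodel set \<Rightarrow> ('p, 'i) pmodel set) \<Rightarrow> bool" where
  "clean L X f \<longleftrightarrow> (\<exists>A. is_amodel A \<and> precondition_finite L A \<and> closing X A \<and>
      deterministic X A \<and> exhaustive X A \<and>
      (\<forall>x\<in>X. \<forall>y\<in>X. f (mclass X x) = mclass X y \<longleftrightarrow> update x A \<in> mclass X y))"

end

theory Submission
  imports Defs
begin

text \<open>Over models of \<Lambda>, the truth of a formula \<phi> at an updated state (s, \<sigma>) is equivalent
  to the truth of a formula T \<sigma> at s (the reduction of \<phi> through the action \<sigma>). Precondition
  finiteness keeps the number of \<Lambda>-distinct formulas T \<sigma> finite, which is what lets the box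
  clause, quantifying over possibly infinitely many successor actions, be a finite conjunction.
  By determinism and exhaustiveness the preimage of the basic open set of \<phi> is then the union of
  the basic open sets of pre \<sigma> \<and> T \<sigma> for \<sigma> \<in> \<Gamma>, hence open.\<close>

lemma sat_Imp: "sat M s (Imp a b) \<longleftrightarrow> (sat M s a \<longrightarrow> sat M s b)"
  by (simp add: Imp_def)

lemma sat_Iff: "sat M s (Iff a b) \<longleftrightarrow> (sat M s a \<longleftrightarrow> sat M s b)"
  by (auto simp add: Iff_def Imp_def)

fun conjs :: "('p, 'i) fm list \<Rightarrow> ('p, 'i) fm" where
  "conjs [] = Top"
| "conjs (a # as) = Conj a (conjs as)"

lemma sat_conjs: "sat M s (conjs as) \<longleftrightarrow> (\<forall>a\<in>set as. sat M s a)"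
  by (induction as) auto

lemma finite_image_combine:
  assumes "finite (f ` S)" "finite (g ` S)"
  shows "finite ((\<lambda>x. h (f x) (g x)) ` S)"
proof -
  have "(\<lambda>x. h (f x) (g x)) ` S \<subseteq> case_prod h ` (f ` S \<times> g ` S)"
    by auto
  then show ?thesis
    using assms by (meson finite_SigmaI finite_imageI finite_subset)
qed

definition logic_models :: "('p, 'i) fm set \<Rightarrow> (('p, 'i) kmodel \<times> nat) set" where
  "logic_models L = {(M, s). is_kmodel M \<and> s \<in> W M \<and> (\<forall>b\<in>L. sat M s b)}"

definition truth_set :: "('p, 'i) fm set \<Rightarrow> ('p, 'i) fm \<Rightarrow> (('p, 'i) kmodel \<times> nat) set" where
  "truth_set L a = {(M, s) \<in> logic_models L. sat M s a}"

lemma logic_models_Rel_closed: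
  assumes "normal_logic L" "(M, s) \<in> logic_models L" "(s, t) \<in> Rel M i"
  shows "(M, t) \<in> logic_models L"
proof -
  have M: "is_kmodel M"
    using assms(2) by (simp add: logic_models_def)
  then have "t \<in> W M"
    using assms(3) unfolding is_kmodel_def by blast
  moreover have "sat M t b" if "b \<in> L" for b
  proof -
    have "Box i b \<in> L"
      using assms(1) that unfolding normal_logic_def by blast
    then show ?thesis
      using assms(2,3) unfolding logic_models_def by auto
  qed
  ultimately show ?thesis
    using M by (simp add: logic_models_def)
qed

lemma sat_Box_cong:
  assumes "normal_logic L" "(M, s) \<in> logic_models L" "truth_set L a = truth_set L b"
  shows "sat M s (Box i a) \<longleftrightarrow> sat M s (Box i b)"
proof -
  have "sat M t a \<longleftrightarrow> sat M t b" if "(s, t) \<in> Rel M i" for t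
    using logic_models_Rel_closed[OF assms(1,2) that] assms(3)
    unfolding truth_set_def by blast
  then show ?thesis
    by auto
qed

lemma truth_set_eq_if_lclass_eq:
  assumes "normal_logic L" "lclass L a = lclass L b"
  shows "truth_set L a = truth_set L b"
proof -
  have "tautology (Iff a a)"
    by (simp add: tautology_def Iff_def Imp_def)
  then have "a \<in> lclass L a"
    using assms(1) unfolding normal_logic_def lclass_def by blast
  then have "Iff b a \<in> L"
    using assms(2) unfolding lclass_def by blast
  then show ?thesis
    unfolding truth_set_def logic_models_def by (auto simp: sat_Iff)
qed

lemma finite_truth_sets_pre:
  assumes "normal_logic L" "precondition_finite L A"
  shows "finite (truth_set L ` pre A ` Act A)"
proof -
  define rep where "rep c = (SOME a. lclass L a = c)" for c
  have "truth_set L (pre A \<sigma>) = truth_set L (rep (lclass L (pre A \<sigma>)))" for \<sigma>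
    unfolding rep_def
    by (rule truth_set_eq_if_lclass_eq[OF assms(1)], rule sym, rule someI_ex) blast
  then have "truth_set L ` pre A ` Act A =
      (\<lambda>c. truth_set L (rep c)) ` (\<lambda>\<sigma>. lclass L (pre A \<sigma>)) ` Act A"
    by (simp add: image_image)
  then show ?thesis
    using assms(2) unfolding precondition_finite_def by simp
qed

lemma truth_set_Neg: "truth_set L (Neg a) = logic_models L - truth_set L a"
  unfolding truth_set_def by auto

lemma truth_set_Conj: "truth_set L (Conj a b) = truth_set L a \<inter> truth_set L b"
  unfolding truth_set_def by auto

lemma finite_truth_sets_Neg:
  "finite (truth_set L ` T ` S) \<Longrightarrow> finite (truth_set L ` (\<lambda>\<sigma>. Neg (T \<sigma>)) ` S)"
  using finite_imageI[of "truth_set L ` T ` S" "\<lambda>c. logic_models L - c"]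
  by (simp add: image_image truth_set_Neg)

lemma finite_truth_sets_Conj:
  assumes "finite (truth_set L ` T ` S)" "finite (truth_set L ` T' ` S)"
  shows "finite (truth_set L ` (\<lambda>\<sigma>. Conj (T \<sigma>) (T' \<sigma>)) ` S)"
  using finite_image_combine[of "truth_set L \<circ> T" S "truth_set L \<circ> T'" "(\<inter>)"] assms
  by (simp add: image_image truth_set_Conj)

definition box_all :: "('p, 'i) fm set \<Rightarrow> 'i \<Rightarrow> (('p, 'i) kmodel \<times> nat) set set \<Rightarrow> ('p, 'i) fm" where
  "box_all L i C = conjs (map (\<lambda>c. Box i (SOME a. truth_set L a = c)) (SOME xs. set xs = C))"

lemma sat_box_all:
  assumes "normal_logic L" "(M, s) \<in> logic_models L" "finite (truth_set L ` F)"
  shows "sat M s (box_all L i (truth_set L ` F)) \<longleftrightarrow> (\<forall>a\<in>F. sat M s (Box i a))"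
proof -
  have set_list: "set (SOME xs. set xs = truth_set L ` F) = truth_set L ` F"
    by (rule someI_ex) (use assms(3) finite_list in blast)
  have "sat M s (Box i (SOME b. truth_set L b = truth_set L a)) \<longleftrightarrow> sat M s (Box i a)" for a
    by (rule sat_Box_cong[OF assms(1,2)], rule someI_ex) blast
  then show ?thesis
    unfolding box_all_def by (simp add: sat_conjs set_list del: sat.simps)
qed

lemma Val_upd_model:
  assumes "s \<in> W M" "\<sigma> \<in> Act A" "sat M s (pre A \<sigma>)"
  shows "prod_encode (s, \<sigma>) \<in> Val (upd_model M A) p \<longleftrightarrow>
    (s \<in> Val M p \<and> \<not> entails (post A \<sigma>) (Neg (Atom p))) \<or> entails (post A \<sigma>) (Atom p)"
  using assms unfolding upd_model_def by auto

lemma sat_upd_model_Box: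
  assumes "is_kmodel M" "s \<in> W M" "\<sigma> \<in> Act A" "sat M s (pre A \<sigma>)"
  shows "sat (upd_model M A) (prod_encode (s, \<sigma>)) (Box i \<phi>) \<longleftrightarrow>
    (\<forall>t \<tau>. (s, t) \<in> Rel M i \<longrightarrow> (\<sigma>, \<tau>) \<in> ARel A i \<longrightarrow> \<tau> \<in> Act A \<longrightarrow> sat M t (pre A \<tau>) \<longrightarrow>
      sat (upd_model M A) (prod_encode (t, \<tau>)) \<phi>)"
proof -
  have "t \<in> W M" if "(s, t) \<in> Rel M i" for t
    using assms(1) that unfolding is_kmodel_def by blast
  then show ?thesis
    using assms(2-4) unfolding upd_model_def by auto
qed

definition reduction ::
    "('p, 'i) fm set \<Rightarrow> ('p, 'i) amodel \<Rightarrow> ('p, 'i) fm \<Rightarrow> (nat \<Rightarrow> ('p, 'i) fm) \<Rightarrow> bool" where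
  "reduction L A \<phi> T \<longleftrightarrow>
    (\<forall>\<sigma>\<in>Act A. \<forall>M s. (M, s) \<in> logic_models L \<longrightarrow> sat M s (pre A \<sigma>) \<longrightarrow>
      (sat (upd_model M A) (prod_encode (s, \<sigma>)) \<phi> \<longleftrightarrow> sat M s (T \<sigma>))) \<and>
    finite (truth_set L ` T ` Act A)"

lemma reduction_Top: "reduction L A Top (\<lambda>_. Top)"
  unfolding reduction_def by (simp add: image_constant_conv)

lemma reduction_Atom:
  "reduction L A (Atom p) (\<lambda>\<sigma>. if entails (post A \<sigma>) (Atom p) then Top
     else if entails (post A \<sigma>) (Neg (Atom p)) then Neg Top else Atom p)"
    (is "reduction L A _ ?T")
proof -
  have "?T ` Act A \<subseteq> {Top, Neg Top, Atom p}"
    by auto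
  then have "finite (?T ` Act A)"
    by (rule finite_subset) simp
  then show ?thesis
    unfolding reduction_def by (auto simp: logic_models_def Val_upd_model)
qed

lemma reduction_Neg: "reduction L A \<phi> T \<Longrightarrow> reduction L A (Neg \<phi>) (\<lambda>\<sigma>. Neg (T \<sigma>))"
  unfolding reduction_def by (simp add: finite_truth_sets_Neg)

lemma reduction_Conj:
  "reduction L A \<phi> T \<Longrightarrow> reduction L A \<psi> T' \<Longrightarrow>
    reduction L A (Conj \<phi> \<psi>) (\<lambda>\<sigma>. Conj (T \<sigma>) (T' \<sigma>))"
  unfolding reduction_def by (simp add: finite_truth_sets_Conj)

lemma reduction_Box:
  assumes L: "normal_logic L" and pf: "precondition_finite L A" and T: "reduction L A \<phi> T"
  defines "V \<equiv> \<lambda>\<tau>. Imp (pre A \<tau>) (T \<tau>)"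
  shows "reduction L A (Box i \<phi>) (\<lambda>\<sigma>. box_all L i (truth_set L ` V ` {\<tau> \<in> Act A. (\<sigma>, \<tau>) \<in> ARel A i}))"
proof -
  let ?succ = "\<lambda>\<sigma>. {\<tau> \<in> Act A. (\<sigma>, \<tau>) \<in> ARel A i}"
  have "finite (truth_set L ` V ` Act A)"
    unfolding V_def Imp_def
    using finite_truth_sets_pre[OF L pf] T unfolding reduction_def
    by (intro finite_truth_sets_Neg finite_truth_sets_Conj) auto
  then have fin_succ: "finite (truth_set L ` V ` ?succ \<sigma>)" for \<sigma>
    by (rule finite_subset[rotated]) auto
  have "(\<lambda>\<sigma>. box_all L i (truth_set L ` V ` ?succ \<sigma>)) ` Act A \<subseteq>
      box_all L i ` Pow (truth_set L ` V ` Act A)"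
    by auto
  then have "finite ((\<lambda>\<sigma>. box_all L i (truth_set L ` V ` ?succ \<sigma>)) ` Act A)"
    using \<open>finite (truth_set L ` V ` Act A)\<close> by (meson finite_Pow_iff finite_imageI finite_subset)
  then have fin: "finite (truth_set L ` (\<lambda>\<sigma>. box_all L i (truth_set L ` V ` ?succ \<sigma>)) ` Act A)"
    by (rule finite_imageI)
  have eq: "sat (upd_model M A) (prod_encode (s, \<sigma>)) (Box i \<phi>) \<longleftrightarrow>
      sat M s (box_all L i (truth_set L ` V ` ?succ \<sigma>))"
    if \<sigma>: "\<sigma> \<in> Act A" and Ms: "(M, s) \<in> logic_models L" and pre: "sat M s (pre A \<sigma>)" for \<sigma> M s
  proof -
    have M: "is_kmodel M" "s \<in> W M"
      using Ms by (auto simp: logic_models_def)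
    have IH: "sat (upd_model M A) (prod_encode (t, \<tau>)) \<phi> \<longleftrightarrow> sat M t (T \<tau>)"
      if "(s, t) \<in> Rel M i" "\<tau> \<in> Act A" "sat M t (pre A \<tau>)" for t \<tau>
      using T logic_models_Rel_closed[OF L Ms that(1)] that(2,3) unfolding reduction_def by blast
    have "sat (upd_model M A) (prod_encode (s, \<sigma>)) (Box i \<phi>) \<longleftrightarrow>
        (\<forall>\<tau>\<in>?succ \<sigma>. \<forall>t. (s, t) \<in> Rel M i \<longrightarrow> sat M t (pre A \<tau>) \<longrightarrow> sat M t (T \<tau>))"
      unfolding sat_upd_model_Box[OF M \<sigma> pre] using IH by auto
    also have "\<dots> \<longleftrightarrow> (\<forall>\<tau>\<in>?succ \<sigma>. sat M s (Box i (V \<tau>)))"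
      by (simp add: V_def sat_Imp)
    also have "\<dots> \<longleftrightarrow> sat M s (box_all L i (truth_set L ` V ` ?succ \<sigma>))"
      using sat_box_all[OF L Ms, of "V ` ?succ \<sigma>" i] fin_succ[of \<sigma>]
      by (simp del: sat.simps)
    finally show ?thesis .
  qed
  show ?thesis
    unfolding reduction_def using eq fin by blast
qed

lemma reduction_exists:
  assumes "normal_logic L" "precondition_finite L A"
  shows "\<exists>T. reduction L A \<phi> T"
proof (induction \<phi>)
  case Top
  show ?case using reduction_Top by blast
next
  case (Atom p)
  show ?case by (rule exI, rule reduction_Atom)
next
  case (Neg \<phi>)
  then show ?case using reduction_Neg by blast
next
  case (Conj \<phi> \<psi>)
  then show ?case using reduction_Conj by blast
next
  case (Box i \<phi>)
  then show ?case using reduction_Box[OF assms] by blast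
qed

lemma deterministic_unique:
  assumes "deterministic X A" "x \<in> X" "\<sigma> \<in> Gam A" "\<tau> \<in> Gam A"
    and "psat x (pre A \<sigma>)" "psat x (pre A \<tau>)"
  shows "\<sigma> = \<tau>"
  using assms unfolding deterministic_def psat_def sat.simps by blast

lemma update_eq:
  assumes "deterministic X A" "x \<in> X" "\<sigma> \<in> Gam A" "psat x (pre A \<sigma>)"
  shows "update x A = (upd_model (fst x) A, prod_encode (snd x, \<sigma>))"
proof -
  have "(THE \<tau>. \<tau> \<in> Gam A \<and> psat x (pre A \<tau>)) = \<sigma>"
    using assms deterministic_unique by (intro the_equality) blast+
  then show ?thesis
    by (simp add: update_def)
qed

lemma psat_update_iff:
  assumes "is_amodel A" "deterministic X A" "exhaustive X A" "reduction L A \<phi> T"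
    and "x \<in> X" "x \<in> logic_models L"
  shows "psat (update x A) \<phi> \<longleftrightarrow> (\<exists>\<sigma>\<in>Gam A. psat x (Conj (pre A \<sigma>) (T \<sigma>)))"
proof -
  obtain \<sigma> where \<sigma>: "\<sigma> \<in> Gam A" "psat x (pre A \<sigma>)"
    using assms(3,5) unfolding exhaustive_def by blast
  obtain M s where x: "x = (M, s)"
    by (cases x)
  have "\<sigma> \<in> Act A"
    using assms(1) \<sigma>(1) unfolding is_amodel_def by blast
  then have "sat (upd_model M A) (prod_encode (s, \<sigma>)) \<phi> \<longleftrightarrow> sat M s (T \<sigma>)"
    using assms(4,6) \<sigma>(2) unfolding reduction_def psat_def x by simp
  then have "psat (update x A) \<phi> \<longleftrightarrow> psat x (T \<sigma>)"
    using update_eq[OF assms(2,5) \<sigma>] unfolding psat_def x by simp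
  also have "\<dots> \<longleftrightarrow> (\<exists>\<tau>\<in>Gam A. psat x (Conj (pre A \<tau>) (T \<tau>)))"
    using \<sigma> deterministic_unique[OF assms(2,5)] by (auto simp: psat_def)
  finally show ?thesis .
qed

lemma basic_open_subset_mspace: "basic_open X a \<subseteq> mspace X"
  unfolding basic_open_def mspace_def by blast

lemma topspace_stone_topology: "topspace (stone_topology X) = mspace X"
proof -
  have "basic_open X Top = mspace X"
    unfolding basic_open_def mspace_def by (auto simp: psat_def)
  then show ?thesis
    unfolding stone_topology_def using basic_open_subset_mspace by auto
qed

lemma mclass_in_basic_open_iff: "x \<in> X \<Longrightarrow> mclass X x \<in> basic_open X a \<longleftrightarrow> psat x a"
  unfolding basic_open_def mclass_def by blast

lemma continuous_map_stone_topologyI: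
  assumes g: "\<And>x. x \<in> X \<Longrightarrow> g x \<in> X"
    and f: "\<And>x. x \<in> X \<Longrightarrow> f (mclass X x) = mclass X (g x)"
    and definable: "\<And>a. \<exists>B. \<forall>x\<in>X. psat (g x) a \<longleftrightarrow> (\<exists>b\<in>B. psat x b)"
  shows "continuous_map (stone_topology X) (stone_topology X) f"
  unfolding stone_topology_def
proof (rule continuous_on_generated_topo)
  show "f ` topspace (topology_generated_by (range (basic_open X))) \<subseteq> \<Union> (range (basic_open X))"
    using topspace_stone_topology[of X] g f unfolding stone_topology_def mspace_def by auto
next
  fix U
  assume "U \<in> range (basic_open X)"
  then obtain a where U: "U = basic_open X a"
    by blast
  obtain B where B: "\<forall>x\<in>X. psat (g x) a \<longleftrightarrow> (\<exists>b\<in>B. psat x b)"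
    using definable by blast
  have "f -` U \<inter> mspace X = (\<Union>b\<in>B. basic_open X b)"
  proof (rule set_eqI)
    fix c
    show "c \<in> f -` U \<inter> mspace X \<longleftrightarrow> c \<in> (\<Union>b\<in>B. basic_open X b)"
    proof (cases "c \<in> mspace X")
      case True
      then obtain x where x: "x \<in> X" "c = mclass X x"
        unfolding mspace_def by blast
      have "c \<in> f -` U \<longleftrightarrow> psat (g x) a"
        using U f[OF x(1)] mclass_in_basic_open_iff[OF g[OF x(1)]] x(2) by simp
      also have "\<dots> \<longleftrightarrow> (\<exists>b\<in>B. psat x b)"
        using B x(1) by blast
      also have "\<dots> \<longleftrightarrow> c \<in> (\<Union>b\<in>B. basic_open X b)"
        using mclass_in_basic_open_iff[OF x(1)] x(2) by blast
      finally show ?thesis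
        using True by blast
    next
      case False
      then show ?thesis
        using basic_open_subset_mspace by blast
    qed
  qed
  then have "f -` U \<inter> topspace (topology_generated_by (range (basic_open X))) = (\<Union>b\<in>B. basic_open X b)"
    using topspace_stone_topology[of X] unfolding stone_topology_def by simp
  moreover have "openin (topology_generated_by (range (basic_open X))) (\<Union>b\<in>B. basic_open X b)"
    by (rule openin_Union) (auto intro: topology_generated_by_Basis)
  ultimately show "openin (topology_generated_by (range (basic_open X)))
      (f -` U \<inter> topspace (topology_generated_by (range (basic_open X))))"
    by simp
qed

theorem proposition7:
  fixes L :: "('p::countable, 'i::finite) fm set"
    and X :: "('p, 'i) pmodel set"
    and f :: "('p, 'i) pmodel set \<Rightarrow> ('p, 'i) pmodel set"
  assumes "normal_logic L"
    and "\<forall>x\<in>X. is_pmodel x"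
    and "\<forall>x\<in>X. \<forall>a\<in>L. psat x a"
    and "clean L X f"
  shows "continuous_map (stone_topology X) (stone_topology X) f"
proof -
  obtain A where A: "is_amodel A" "precondition_finite L A" "closing X A"
      "deterministic X A" "exhaustive X A"
    and fA: "\<forall>x\<in>X. \<forall>y\<in>X. f (mclass X x) = mclass X y \<longleftrightarrow> update x A \<in> mclass X y"
    using assms(4) unfolding clean_def by blast
  have closed: "x \<in> X \<Longrightarrow> update x A \<in> X" for x
    using A(3) unfolding closing_def by blast
  have models: "x \<in> X \<Longrightarrow> x \<in> logic_models L" for x
    using assms(2,3) unfolding logic_models_def is_pmodel_def psat_def by auto
  show ?thesis
  proof (rule continuous_map_stone_topologyI)
    show "x \<in> X \<Longrightarrow> f (mclass X x) = mclass X (update x A)" for x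
      using fA closed[of x] unfolding mclass_def by blast
    fix a
    obtain T where "reduction L A a T"
      using reduction_exists[OF assms(1) A(2)] by blast
    then show "\<exists>B. \<forall>x\<in>X. psat (update x A) a \<longleftrightarrow> (\<exists>b\<in>B. psat x b)"
      using psat_update_iff[OF A(1,4,5)] models
      by (intro exI[of _ "(\<lambda>\<sigma>. Conj (pre A \<sigma>) (T \<sigma>)) ` Gam A"]) auto
  qed (use closed in blast)
qed

end
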